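(* Let $\mathfrak W=\{A_0,\dots,A_p\}$ be a finite collection of finite subsets of $\mathbb N$, let $e,k,y\in\mathbb N$, let $\sigma$ be a finite string of natural numbers, and put $m=(y-1)\left(\prod_{j\le p}|A_j|\right)+1$. Then at least one of the following holds: (1) there exist a selection $S$ of $\mathfrak W$ and a finite tree $F\subseteq\mathbb N^{<\omega}$ such that $F$ is $y$-branching below $\sigma$, every terminal node of $F$ has length $|\sigma|+k$, and $F$ accepts $S$ for $e$; (2) there are fewer than $m$ strings $\tau$ with $\tau^-=\sigma$ (pairwise distinct, i.e. siblings immediately below $\sigma$) each of which is $i$-bad relative to $\langle\mathfrak W,m,e\rangle$ for some $i\le k$.
   Context: Strings are finite sequences of natural numbers, viewed as functions on an initial segment of $\mathbb N$; $|\sigma|$ is the length, and for $|\sigma|>0$, $\sigma^-=\sigma\restriction(|\sigma|-1)$. Two strings $\tau_1\ne\tau_2$ with $\tau_1^-=\tau_2^-=\sigma$ are siblings immediately below $\sigma$. For an oracle program (Turing functional) with index $e$ and a string $\sigma$, $W^\sigma_e$ is the set of $x$ such that the oracle program $e$ with any oracle extending $\sigma$, using only oracle queries below $|\sigma|$ (use $\le|\sigma|$), halts on input $x$. For a finite $S\subseteq\mathbb N$, $\sigma$ accepts $S$ for $e$ if $S\subseteq W^\sigma_e$; a finite tree $F$ accepts $S$ for $e$ if every terminal node of $F$ accepts $S$ for $e$. A selection of a finite collection of sets $\mathfrak W$ is a set containing exactly one element from each member of $\mathfrak W$. A finite tree $F$ is $y$-branching below $\sigma$ (of depth $k$) if every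 node of $F$ is a prefix or extension of $\sigma$, every terminal node has length $|\sigma|+k$, and every node of $F$ extending $\sigma$ (including $\sigma$) of length less than $|\sigma|+k$ has at least $y$ distinct immediate extensions in $F$. Badness is defined inductively: $\sigma$ is 1-bad relative to $\langle\mathfrak W,m,e\rangle$ if $\sigma$ accepts some selection of $\mathfrak W$ for $e$; $\sigma$ is $(n+1)$-bad relative to $\langle\mathfrak W,m,e\rangle$ if $\sigma$ has $m$ distinct extensions of length $|\sigma|+1$ that are $n$-bad relative to $\langle\mathfrak W,m,e\rangle$. *)

theory Defs
  imports Main "HOL-Library.Sublist"
begin

text \<open>An oracle computation model is a parameter
  Phi :: nat => (nat => nat) => nat => nat option, where Phi e f x = Some u
  means: oracle program e with oracle f halts on input x, and u is the use
  (all oracle queries are below u); None means divergence.\<close>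

type_synonym oracle_comp = "nat \<Rightarrow> (nat \<Rightarrow> nat) \<Rightarrow> nat \<Rightarrow> nat option"

definition oracle_extends :: "(nat \<Rightarrow> nat) \<Rightarrow> nat list \<Rightarrow> bool" where
  "oracle_extends f \<sigma> \<longleftrightarrow> (\<forall>i<length \<sigma>. f i = \<sigma> ! i)"

definition Wset :: "oracle_comp \<Rightarrow> nat \<Rightarrow> nat list \<Rightarrow> nat set" where
  "Wset Phi e \<sigma> = {x. \<forall>f. oracle_extends f \<sigma> \<longrightarrow>
      (\<exists>u. Phi e f x = Some u \<and> u \<le> length \<sigma>)}"

definition accepts :: "oracle_comp \<Rightarrow> nat \<Rightarrow> nat list \<Rightarrow> nat set \<Rightarrow> bool" where
  "accepts Phi e \<sigma> S \<longleftrightarrow> S \<subseteq> Wset Phi e \<sigma>"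

text \<open>The collection W = {A_0,...,A_p} is given as an indexed family A j, j \<le> p.
  A selection picks one element a_j from each A_j.\<close>
definition is_selection :: "(nat \<Rightarrow> nat set) \<Rightarrow> nat \<Rightarrow> nat set \<Rightarrow> bool" where
  "is_selection A p S \<longleftrightarrow> (\<exists>a. (\<forall>j\<le>p. a j \<in> A j) \<and> S = a ` {..p})"

definition is_tree :: "nat list set \<Rightarrow> bool" where
  "is_tree F \<longleftrightarrow> F \<noteq> {} \<and> (\<forall>\<tau>\<in>F. \<forall>\<rho>. prefix \<rho> \<tau> \<longrightarrow> \<rho> \<in> F)"

definition terminal :: "nat list set \<Rightarrow> nat list \<Rightarrow> bool" where
  "terminal F \<tau> \<longleftrightarrow> \<tau> \<in> F \<and> \<not> (\<exists>\<rho>\<in>F. strict_prefix \<tau> \<rho>)"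

definition tree_accepts :: "oracle_comp \<Rightarrow> nat \<Rightarrow> nat list set \<Rightarrow> nat set \<Rightarrow> bool" where
  "tree_accepts Phi e F S \<longleftrightarrow> (\<forall>\<tau>. terminal F \<tau> \<longrightarrow> accepts Phi e \<tau> S)"

definition y_branching :: "nat list set \<Rightarrow> nat \<Rightarrow> nat list \<Rightarrow> nat \<Rightarrow> bool" where
  "y_branching F y \<sigma> k \<longleftrightarrow>
     \<sigma> \<in> F \<and>
     (\<forall>\<tau>\<in>F. prefix \<tau> \<sigma> \<or> prefix \<sigma> \<tau>) \<and>
     (\<forall>\<tau>. terminal F \<tau> \<longrightarrow> length \<tau> = length \<sigma> + k) \<and>
     (\<forall>\<tau>\<in>F. prefix \<sigma> \<tau> \<and> length \<tau> < length \<sigma> + k \<longrightarrow>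
        y \<le> card {\<rho>\<in>F. prefix \<tau> \<rho> \<and> length \<rho> = length \<tau> + 1})"

fun bad :: "oracle_comp \<Rightarrow> (nat \<Rightarrow> nat set) \<Rightarrow> nat \<Rightarrow> nat \<Rightarrow> nat \<Rightarrow> nat \<Rightarrow> nat list \<Rightarrow> bool" where
  "bad Phi A p m e 0 \<sigma> = False"
| "bad Phi A p m e (Suc 0) \<sigma> = (\<exists>S. is_selection A p S \<and> accepts Phi e \<sigma> S)"
| "bad Phi A p m e (Suc (Suc n)) \<sigma> =
     (\<exists>T. finite T \<and> m \<le> card T \<and>
        (\<forall>\<tau>\<in>T. prefix \<sigma> \<tau> \<and> length \<tau> = length \<sigma> + 1 \<and> bad Phi A p m e (Suc n) \<tau>))"

end

theory Submission
  imports Defs "HOL-Library.FuncSet"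
begin

text \<open>Since \<open>i\<close>-badness implies \<open>j\<close>-badness for \<open>0 < i \<le> j\<close>, \<open>m\<close> siblings below \<open>\<sigma>\<close> that are
  bad at levels \<open>\<le> k\<close> make \<open>\<sigma>\<close> itself \<open>(k+1)\<close>-bad. By induction on \<open>n\<close>, an \<open>(n+1)\<close>-bad string
  \<open>\<tau>\<close> is the root of a \<open>y\<close>-branching tree of height \<open>n\<close> whose leaves accept one common
  selection: among the \<open>m = (y-1) N + 1\<close> bad children of \<open>\<tau>\<close>, where \<open>N = \<Prod>|A\<^sub>j|\<close> bounds the
  number of selections, the pigeonhole principle finds \<open>y\<close> whose trees accept the same
  selection, and these trees are joined below \<open>\<tau>\<close>. Adding the prefixes of \<open>\<sigma>\<close> to the tree
  rooted at \<open>\<sigma>\<close> gives the tree of alternative (1).\<close>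

lemma Wset_prefix_mono: "prefix \<sigma> \<tau> \<Longrightarrow> Wset Phi e \<sigma> \<subseteq> Wset Phi e \<tau>"
proof
  fix x assume pre: "prefix \<sigma> \<tau>" and x: "x \<in> Wset Phi e \<sigma>"
  have len: "length \<sigma> \<le> length \<tau>" using pre by (rule prefix_length_le)
  show "x \<in> Wset Phi e \<tau>"
    unfolding Wset_def
  proof (intro CollectI allI impI)
    fix f assume "oracle_extends f \<tau>"
    then have "oracle_extends f \<sigma>" using pre len unfolding oracle_extends_def
      by (metis order_less_le_trans prefix_def nth_append)
    then obtain u where "Phi e f x = Some u" "u \<le> length \<sigma>" using x unfolding Wset_def by blast
    then show "\<exists>u. Phi e f x = Some u \<and> u \<le> length \<tau>" using len by auto
  qed
qed

lemma accepts_prefix_mono: "prefix \<sigma> \<tau> \<Longrightarrow> accepts Phi e \<sigma> S \<Longrightarrow> accepts Phi e \<tau> S"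
  unfolding accepts_def using Wset_prefix_mono by blast

text \<open>1-badness is inherited by extensions, so the \<open>m\<close> strings \<open>\<tau> @ [i]\<close>, \<open>i < m\<close>, witness
  the next level.\<close>
lemma bad_Suc_imp_bad_Suc_Suc:
  "bad Phi A p m e (Suc n) \<tau> \<Longrightarrow> bad Phi A p m e (Suc (Suc n)) \<tau>"
proof (induction n arbitrary: \<tau>)
  case 0
  then obtain S where S: "is_selection A p S" "accepts Phi e \<tau> S" by auto
  let ?T = "(\<lambda>i. \<tau> @ [i]) ` {..<m}"
  have "card ?T = m" by (subst card_image) (auto simp: inj_on_def)
  moreover have "\<forall>t\<in>?T. prefix \<tau> t \<and> length t = length \<tau> + 1 \<and> bad Phi A p m e (Suc 0) t"
    using S accepts_prefix_mono[of \<tau> _ Phi e S] by auto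
  ultimately show ?case by (intro bad.simps(3)[THEN iffD2] exI[of _ ?T]) auto
next
  case (Suc n)
  from Suc.prems obtain T where T: "finite T" "m \<le> card T"
    "\<forall>t\<in>T. prefix \<tau> t \<and> length t = length \<tau> + 1 \<and> bad Phi A p m e (Suc n) t"
    by auto
  then have "\<forall>t\<in>T. prefix \<tau> t \<and> length t = length \<tau> + 1 \<and> bad Phi A p m e (Suc (Suc n)) t"
    using Suc.IH by blast
  with T(1,2) show ?case by (intro bad.simps(3)[THEN iffD2] exI[of _ T]) blast
qed

lemma bad_mono:
  assumes "0 < i" "i \<le> k" "bad Phi A p m e i \<tau>"
  shows "bad Phi A p m e k \<tau>"
  using assms(2,3)
proof (induction k rule: dec_induct)
  case (step k)
  then obtain n where "k = Suc n" using assms(1) by (cases k) auto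
  with step show ?case using bad_Suc_imp_bad_Suc_Suc by simp
qed

lemma finite_card_selections:
  assumes "\<forall>j\<le>p. finite (A j)"
  shows "finite {S. is_selection A p S}" "card {S. is_selection A p S} \<le> (\<Prod>j\<le>p. card (A j))"
proof -
  have sel: "{S. is_selection A p S} = (\<lambda>a. a ` {..p}) ` PiE {..p} A"
  proof (intro set_eqI iffI)
    fix S assume "S \<in> {S. is_selection A p S}"
    then obtain a where a: "\<forall>j\<le>p. a j \<in> A j" "S = a ` {..p}" unfolding is_selection_def by auto
    then have "restrict a {..p} \<in> PiE {..p} A" "S = restrict a {..p} ` {..p}" by auto
    then show "S \<in> (\<lambda>a. a ` {..p}) ` PiE {..p} A" by blast
  qed (auto simp: is_selection_def PiE_iff)
  have fin: "finite (PiE {..p} A)" using assms by (intro finite_PiE) auto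
  then show "finite {S. is_selection A p S}" unfolding sel by blast
  have "card {S. is_selection A p S} \<le> card (PiE {..p} A)" unfolding sel using fin by (rule card_image_le)
  then show "card {S. is_selection A p S} \<le> (\<Prod>j\<le>p. card (A j))" by (simp add: card_PiE)
qed

lemma pigeonhole_large_fiber:
  assumes "finite B" "f ` T \<subseteq> B" "(y - 1) * card B + 1 \<le> card T"
  shows "\<exists>b\<in>B. y \<le> card {t\<in>T. f t = b}"
proof (rule ccontr)
  assume "\<not> ?thesis"
  then have small: "\<forall>b\<in>B. card {t\<in>T. f t = b} \<le> y - 1" by auto
  have "T = (\<Union>b\<in>B. {t\<in>T. f t = b})" using assms(2) by auto
  then have "card T \<le> (\<Sum>b\<in>B. card {t\<in>T. f t = b})" by (metis card_UN_le[OF assms(1)])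
  also have "\<dots> \<le> (\<Sum>b\<in>B. y - 1)" using small by (intro sum_mono) auto
  also have "\<dots> = (y - 1) * card B" by simp
  finally show False using assms(3) by linarith
qed

definition children :: "nat list set \<Rightarrow> nat list \<Rightarrow> nat list set" where
  "children F \<rho> = {\<rho>'\<in>F. prefix \<rho> \<rho>' \<and> length \<rho>' = length \<rho> + 1}"

lemma finite_children: "finite F \<Longrightarrow> finite (children F \<rho>)"
  unfolding children_def by simp

text \<open>The part of a \<open>y\<close>-branching tree of depth \<open>n\<close> that lies above its root \<open>\<tau>\<close>.\<close>
definition branching_subtree :: "nat list set \<Rightarrow> nat \<Rightarrow> nat list \<Rightarrow> nat \<Rightarrow> bool" where
  "branching_subtree F y \<tau> n \<longleftrightarrow> finite F \<and> \<tau> \<in> F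
    \<and> (\<forall>\<rho>\<in>F. prefix \<tau> \<rho> \<and> length \<rho> \<le> length \<tau> + n)
    \<and> (\<forall>\<rho> \<rho>'. \<rho>' \<in> F \<longrightarrow> prefix \<tau> \<rho> \<longrightarrow> prefix \<rho> \<rho>' \<longrightarrow> \<rho> \<in> F)
    \<and> (\<forall>\<rho>\<in>F. length \<rho> < length \<tau> + n \<longrightarrow> y \<le> card (children F \<rho>))"

lemma branching_subtreeD:
  assumes "branching_subtree F y \<tau> n"
  shows "finite F" "\<tau> \<in> F" "\<rho> \<in> F \<Longrightarrow> prefix \<tau> \<rho>" "\<rho> \<in> F \<Longrightarrow> length \<rho> \<le> length \<tau> + n"
    "\<rho>' \<in> F \<Longrightarrow> prefix \<tau> \<rho> \<Longrightarrow> prefix \<rho> \<rho>' \<Longrightarrow> \<rho> \<in> F"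
    "\<rho> \<in> F \<Longrightarrow> length \<rho> < length \<tau> + n \<Longrightarrow> y \<le> card (children F \<rho>)"
  using assms unfolding branching_subtree_def by blast+

lemma branching_subtree_singleton: "branching_subtree {\<tau>} y \<tau> 0"
  unfolding branching_subtree_def by (auto intro: prefix_order.antisym)

lemma branching_subtree_join:
  assumes T: "finite T" "y \<le> card T"
    and child: "\<And>t. t \<in> T \<Longrightarrow> prefix \<tau> t \<and> length t = length \<tau> + 1"
    and sub: "\<And>t. t \<in> T \<Longrightarrow> branching_subtree (G t) y t n"
  shows "branching_subtree (insert \<tau> (\<Union>t\<in>T. G t)) y \<tau> (Suc n)"
proof -
  define F where "F = insert \<tau> (\<Union>t\<in>T. G t)"
  note G = branching_subtreeD[OF sub]
  have finF: "finite F" unfolding F_def using T(1) G(1) by blast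
  have nodes: "prefix \<tau> \<rho> \<and> length \<rho> \<le> length \<tau> + Suc n" if "\<rho> \<in> F" for \<rho>
    using that child G(3,4) unfolding F_def by (auto intro: prefix_order.trans)
  have closed: "\<rho> \<in> F" if \<rho>'F: "\<rho>' \<in> F" and \<tau>\<rho>: "prefix \<tau> \<rho>" and \<rho>\<rho>': "prefix \<rho> \<rho>'"
    for \<rho> \<rho>'
  proof (cases "\<rho> = \<tau>")
    case False
    then have "\<rho>' \<noteq> \<tau>" using \<tau>\<rho> \<rho>\<rho>' by (metis prefix_order.antisym)
    then obtain t where t: "t \<in> T" "\<rho>' \<in> G t" using \<rho>'F unfolding F_def by blast
    have "length \<tau> < length \<rho>"
      using \<tau>\<rho> False prefix_length_less[of \<tau> \<rho>] by (auto simp: strict_prefix_def)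
    then have "length t \<le> length \<rho>" using child[OF t(1)] by simp
    then have "prefix t \<rho>" by (rule prefix_length_prefix[OF G(3)[OF t] \<rho>\<rho>'])
    then have "\<rho> \<in> G t" by (rule G(5)[OF t _ \<rho>\<rho>'])
    then show ?thesis using t(1) unfolding F_def by blast
  qed (simp add: F_def)
  have branching: "y \<le> card (children F \<rho>)"
    if \<rho>F: "\<rho> \<in> F" and len: "length \<rho> < length \<tau> + Suc n" for \<rho>
  proof -
    have fin_children: "finite (children F \<rho>)" using finF by (rule finite_children)
    show ?thesis
    proof (cases "\<rho> = \<tau>")
      case True
      have "T \<subseteq> children F \<rho>"
      proof
        fix t assume "t \<in> T"
        then show "t \<in> children F \<rho>"
          using child G(2) True by (auto simp: children_def F_def)
      qed
      then have "card T \<le> card (children F \<rho>)" by (rule card_mono[OF fin_children])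
      with T(2) show ?thesis by simp
    next
      case False
      then obtain t where t: "t \<in> T" "\<rho> \<in> G t" using \<rho>F unfolding F_def by blast
      then have "y \<le> card (children (G t) \<rho>)" using G(6)[OF t] child[OF t(1)] len by simp
      also have "\<dots> \<le> card (children F \<rho>)"
        using fin_children t by (intro card_mono) (auto simp: children_def F_def)
      finally show ?thesis .
    qed
  qed
  have "\<tau> \<in> F" by (simp add: F_def)
  then show ?thesis
    unfolding F_def[symmetric] branching_subtree_def using finF nodes closed branching by blast
qed

lemma leaves_accept_join:
  assumes "\<And>t. t \<in> T \<Longrightarrow> length t = length \<tau> + 1"
    and "\<And>t. t \<in> T \<Longrightarrow> \<forall>\<rho>\<in>G t. length \<rho> = length t + n \<longrightarrow> accepts Phi e \<rho> S"
  shows "\<forall>\<rho>\<in>insert \<tau> (\<Union>t\<in>T. G t). length \<rho> = length \<tau> + Suc n \<longrightarrow> accepts Phi e \<rho> S"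
  using assms by fastforce

lemma bad_imp_accepting_branching_subtree:
  assumes finA: "\<forall>j\<le>p. finite (A j)"
    and m: "(y - 1) * (\<Prod>j\<le>p. card (A j)) + 1 \<le> m"
    and "bad Phi A p m e (Suc n) \<tau>"
  shows "\<exists>S F. is_selection A p S \<and> branching_subtree F y \<tau> n
           \<and> (\<forall>\<rho>\<in>F. length \<rho> = length \<tau> + n \<longrightarrow> accepts Phi e \<rho> S)"
  using assms(3)
proof (induction n arbitrary: \<tau>)
  case 0
  then obtain S where "is_selection A p S" "accepts Phi e \<tau> S" by auto
  then show ?case by (intro exI[of _ S] exI[of _ "{\<tau>}"]) (simp add: branching_subtree_singleton)
next
  case (Suc n)
  from Suc.prems obtain T where T: "finite T" "m \<le> card T"
    "\<forall>t\<in>T. prefix \<tau> t \<and> length t = length \<tau> + 1 \<and> bad Phi A p m e (Suc n) t"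
    by auto
  then have "\<forall>t\<in>T. \<exists>S F. is_selection A p S \<and> branching_subtree F y t n
               \<and> (\<forall>\<rho>\<in>F. length \<rho> = length t + n \<longrightarrow> accepts Phi e \<rho> S)"
    using Suc.IH by blast
  then obtain Sel Sub where sub: "\<And>t. t \<in> T \<Longrightarrow> is_selection A p (Sel t)
      \<and> branching_subtree (Sub t) y t n
      \<and> (\<forall>\<rho>\<in>Sub t. length \<rho> = length t + n \<longrightarrow> accepts Phi e \<rho> (Sel t))"
    by metis
  text \<open>Pigeonhole: colour each child by the selection its tree accepts.\<close>
  define B where "B = {S. is_selection A p S}"
  have finB: "finite B" using finite_card_selections(1)[OF finA] unfolding B_def .
  have "(y - 1) * card B \<le> (y - 1) * (\<Prod>j\<le>p. card (A j))"
    using finite_card_selections(2)[OF finA] unfolding B_def by (rule mult_le_mono2)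
  then have "(y - 1) * card B + 1 \<le> card T" using m T(2) by linarith
  moreover have "Sel ` T \<subseteq> B" using sub unfolding B_def by blast
  ultimately obtain S where "S \<in> B" and fiber: "y \<le> card {t\<in>T. Sel t = S}"
    using pigeonhole_large_fiber[OF finB] by blast
  then have S: "is_selection A p S" unfolding B_def by simp
  define T' where "T' = {t\<in>T. Sel t = S}"
  have "branching_subtree (insert \<tau> (\<Union>t\<in>T'. Sub t)) y \<tau> (Suc n)"
  proof (rule branching_subtree_join)
    show "finite T'" using T(1) unfolding T'_def by simp
    show "y \<le> card T'" using fiber unfolding T'_def .
    show "prefix \<tau> t \<and> length t = length \<tau> + 1" if "t \<in> T'" for t
      using T(3) that unfolding T'_def by blast
    show "branching_subtree (Sub t) y t n" if "t \<in> T'" for t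
      using sub that unfolding T'_def by blast
  qed
  moreover have "\<forall>\<rho>\<in>insert \<tau> (\<Union>t\<in>T'. Sub t). length \<rho> = length \<tau> + Suc n \<longrightarrow> accepts Phi e \<rho> S"
    using T(3) sub unfolding T'_def by (intro leaves_accept_join) auto
  ultimately show ?case using S(1) by blast
qed

lemma bad_Suc_if_many_bad_children:
  assumes T: "finite T" "m \<le> card T" "0 < m"
    and bad_children: "\<forall>t\<in>T. t \<noteq> [] \<and> butlast t = \<sigma> \<and> (\<exists>i\<le>k. bad Phi A p m e i t)"
  shows "bad Phi A p m e (Suc k) \<sigma>"
proof -
  have "T \<noteq> {}" using T by auto
  then obtain t0 i0 where i0: "i0 \<le> k" "bad Phi A p m e i0 t0" using bad_children by blast
  then have "i0 \<noteq> 0" by (cases i0) simp_all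
  with i0(1) obtain k' where k': "k = Suc k'" by (cases k) auto
  have child: "prefix \<sigma> t \<and> length t = length \<sigma> + 1 \<and> bad Phi A p m e k t" if "t \<in> T" for t
  proof -
    from bad_children that obtain i where t: "t \<noteq> []" "butlast t = \<sigma>" "i \<le> k" "bad Phi A p m e i t"
      by (auto dest: bspec)
    have "0 < i" using t(4) by (cases i) simp_all
    then have "bad Phi A p m e k t" using bad_mono t(3,4) by blast
    moreover have "t = \<sigma> @ [last t]" using t(1,2) by (metis append_butlast_last_id)
    ultimately show ?thesis by (metis prefixI length_append_singleton Suc_eq_plus1)
  qed
  have "\<forall>t\<in>T. prefix \<sigma> t \<and> length t = length \<sigma> + 1 \<and> bad Phi A p m e (Suc k') t"
    using child unfolding k' by blast
  with T(1,2) show ?thesis unfolding k' by (subst bad.simps(3)) blast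
qed

lemma terminal_extension_of_branching_subtree:
  assumes sub: "branching_subtree F y \<sigma> k" and "0 < y"
    and is_terminal: "terminal (F \<union> set (prefixes \<sigma>)) \<rho>"
  shows "\<rho> \<in> F" "length \<rho> = length \<sigma> + k"
proof -
  note F = branching_subtreeD[OF sub]
  have \<rho>: "\<rho> \<in> F \<union> set (prefixes \<sigma>)"
    and maximal: "\<And>\<rho>'. \<rho>' \<in> F \<Longrightarrow> \<not> strict_prefix \<rho> \<rho>'"
    using is_terminal unfolding terminal_def by auto
  show "\<rho> \<in> F"
  proof (cases "\<rho> \<in> F")
    case False
    then have "prefix \<rho> \<sigma>" using \<rho> by simp
    then show ?thesis using maximal[OF F(2)] F(2) by (metis prefix_order.le_less)
  qed
  moreover have "\<not> length \<rho> < length \<sigma> + k" if "\<rho> \<in> F"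
  proof
    assume "length \<rho> < length \<sigma> + k"
    then have "children F \<rho> \<noteq> {}" using F(6)[OF that] \<open>0 < y\<close> by auto
    then obtain \<rho>' where "\<rho>' \<in> F" "prefix \<rho> \<rho>'" "length \<rho>' = length \<rho> + 1"
      unfolding children_def by blast
    then show False using maximal by (metis prefix_order.le_less less_add_one less_irrefl)
  qed
  ultimately show "length \<rho> = length \<sigma> + k" using F(4) by force
qed

lemma is_tree_extension_of_branching_subtree:
  assumes sub: "branching_subtree F y \<sigma> k"
  shows "is_tree (F \<union> set (prefixes \<sigma>))"
  unfolding is_tree_def
proof (intro conjI ballI allI impI)
  show "F \<union> set (prefixes \<sigma>) \<noteq> {}" by simp
next
  fix \<tau> \<rho> assume \<tau>: "\<tau> \<in> F \<union> set (prefixes \<sigma>)" and \<rho>\<tau>: "prefix \<rho> \<tau>"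
  show "\<rho> \<in> F \<union> set (prefixes \<sigma>)"
  proof (cases "\<tau> \<in> F")
    case True
    then have "prefix \<sigma> \<tau>" by (rule branching_subtreeD(3)[OF sub])
    then consider "prefix \<sigma> \<rho>" | "prefix \<rho> \<sigma>" using \<rho>\<tau> prefix_same_cases by blast
    then show ?thesis
    proof cases
      case 1
      then show ?thesis using branching_subtreeD(5)[OF sub True _ \<rho>\<tau>] by simp
    qed simp
  next
    case False
    then have "prefix \<tau> \<sigma>" using \<tau> by simp
    then show ?thesis using \<rho>\<tau> by (simp add: prefix_order.trans)
  qed
qed

lemma y_branching_extension_of_branching_subtree:
  assumes sub: "branching_subtree F y \<sigma> k" and "0 < y"
  shows "y_branching (F \<union> set (prefixes \<sigma>)) y \<sigma> k"
  unfolding y_branching_def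
proof (intro conjI ballI allI impI)
  note F = branching_subtreeD[OF sub]
  show "\<sigma> \<in> F \<union> set (prefixes \<sigma>)" using F(2) by simp
  show "prefix \<tau> \<sigma> \<or> prefix \<sigma> \<tau>" if "\<tau> \<in> F \<union> set (prefixes \<sigma>)" for \<tau>
    using that F(3) by auto
  show "length \<tau> = length \<sigma> + k" if "terminal (F \<union> set (prefixes \<sigma>)) \<tau>" for \<tau>
    using terminal_extension_of_branching_subtree(2)[OF sub \<open>0 < y\<close> that] .
  fix \<tau> assume \<tau>: "\<tau> \<in> F \<union> set (prefixes \<sigma>)" "prefix \<sigma> \<tau> \<and> length \<tau> < length \<sigma> + k"
  then have "\<tau> \<in> F" using F(2) prefix_order.antisym by auto
  then have "y \<le> card (children F \<tau>)" using F(6) \<tau>(2) by blast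
  also have "\<dots> \<le> card (children (F \<union> set (prefixes \<sigma>)) \<tau>)"
    using F(1) by (intro card_mono finite_children) (auto simp: children_def)
  finally show "y \<le> card {\<rho> \<in> F \<union> set (prefixes \<sigma>). prefix \<tau> \<rho> \<and> length \<rho> = length \<tau> + 1}"
    unfolding children_def .
qed

lemma y_branching_mono: "y_branching F y' \<sigma> k \<Longrightarrow> y \<le> y' \<Longrightarrow> y_branching F y \<sigma> k"
  unfolding y_branching_def by (meson le_trans)

lemma obtain_subset_with_card_if_not_small:
  assumes "\<not> (finite X \<and> card X < n)"
  obtains T where "T \<subseteq> X" "finite T" "card T = n"
proof (cases "finite X")
  case True
  with assms have "n \<le> card X" by simp
  then show ?thesis using obtain_subset_with_card_n that by metis
next
  case False
  then show ?thesis using infinite_arbitrarily_large that by blast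
qed

theorem lemma3p4:
  fixes Phi :: oracle_comp and A :: "nat \<Rightarrow> nat set"
    and p e k y m :: nat and \<sigma> :: "nat list"
  assumes finA: "\<forall>j\<le>p. finite (A j)"
    and m_def: "m = (y - 1) * (\<Prod>j\<le>p. card (A j)) + 1"
  shows "(\<exists>S F. is_selection A p S \<and> finite F \<and> is_tree F \<and> y_branching F y \<sigma> k
              \<and> (\<forall>\<tau>. terminal F \<tau> \<longrightarrow> length \<tau> = length \<sigma> + k)
              \<and> tree_accepts Phi e F S)
       \<or> (let X = {\<tau>. \<tau> \<noteq> [] \<and> butlast \<tau> = \<sigma> \<and> (\<exists>i\<le>k. bad Phi A p m e i \<tau>)}
          in finite X \<and> card X < m)"
proof (rule disjCI)
  let ?X = "{\<tau>. \<tau> \<noteq> [] \<and> butlast \<tau> = \<sigma> \<and> (\<exists>i\<le>k. bad Phi A p m e i \<tau>)}"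
  assume "\<not> (let X = ?X in finite X \<and> card X < m)"
  then obtain T where T: "T \<subseteq> ?X" "finite T" "card T = m"
    unfolding Let_def by (rule obtain_subset_with_card_if_not_small)
  have "bad Phi A p m e (Suc k) \<sigma>"
  proof (rule bad_Suc_if_many_bad_children)
    show "finite T" "m \<le> card T" "0 < m" using T(2,3) m_def by simp_all
    show "\<forall>t\<in>T. t \<noteq> [] \<and> butlast t = \<sigma> \<and> (\<exists>i\<le>k. bad Phi A p m e i t)" using T(1) by blast
  qed
  text \<open>For \<open>y = 0\<close> the branching condition is void and would not force the leaves to
    reach length \<open>|\<sigma>| + k\<close>, so the tree is built \<open>max y 1\<close>-branching; \<open>m\<close> is the same.\<close>
  moreover have "max y 1 - 1 = y - 1" by simp
  then have "(max y 1 - 1) * (\<Prod>j\<le>p. card (A j)) + 1 \<le> m" using m_def by simp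
  ultimately obtain S F where S: "is_selection A p S" and sub: "branching_subtree F (max y 1) \<sigma> k"
    and leaves: "\<forall>\<rho>\<in>F. length \<rho> = length \<sigma> + k \<longrightarrow> accepts Phi e \<rho> S"
    using bad_imp_accepting_branching_subtree[OF finA] by blast
  let ?F = "F \<union> set (prefixes \<sigma>)"
  have terminal: "\<rho> \<in> F \<and> length \<rho> = length \<sigma> + k" if "terminal ?F \<rho>" for \<rho>
    using terminal_extension_of_branching_subtree[OF sub _ that] by simp
  have "y_branching ?F y \<sigma> k"
    using y_branching_mono[OF y_branching_extension_of_branching_subtree[OF sub]] by simp
  moreover have "finite ?F" using branching_subtreeD(1)[OF sub] by simp
  moreover have "tree_accepts Phi e ?F S" unfolding tree_accepts_def using terminal leaves by blast
  ultimately show "\<exists>S F. is_selection A p S \<and> finite F \<and> is_tree F \<and> y_branching F y \<sigma> k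
      \<and> (\<forall>\<tau>. terminal F \<tau> \<longrightarrow> length \<tau> = length \<sigma> + k) \<and> tree_accepts Phi e F S"
    using S is_tree_extension_of_branching_subtree[OF sub] terminal by blast
qed

end
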